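(* Let $n\ge3$, let $\boldsymbol\ell=(\ell_1,\ldots,\ell_n)$ be positive numbers, let $\mathbf b$ be a vector of offset Kasner exponents, and let $\mu,\tau_0\in\mathbb{R}$ with at least one of them equal to zero. Then the CMC conformal data set $(g_{\boldsymbol\ell},\mu\,\sigma_{\mathbf b,\boldsymbol\ell},\tau_0)$ on $T^n$ generates no solution of the constraint equations unless $\mu=0$ and $\tau_0=0$; in that case, for every $r>0$ it generates the data $(g_{r\boldsymbol\ell},0)$, which is the Cauchy data of a constant-$t$ slice of the static toroidal spacetime with metric $-dt^2+\sum_{k=1}^n(r\ell_k)^2(ds^k)^2$.
   Context: $q=\frac{2n}{n-2}$, $\kappa=\frac{n-1}{n}$. $T^n=(\mathbb{R}/\mathbb{Z})^n$ with unit coordinates $(s^1,\ldots,s^n)$; $g_{\boldsymbol\ell}=\sum_k\ell_k^2(ds^k)^2$, $r\boldsymbol\ell=(r\ell_1,\ldots,r\ell_n)$. Offset Kasner exponents: $\mathbf b\in\mathbb{R}^n$ with $\sum_kb_k=0$, $\sum_kb_k^2=\kappa$; $\sigma_{\mathbf b,\boldsymbol\ell}=\sum_kb_k\ell_k^2(ds^k)^2$ (transverse-traceless for $g_{\boldsymbol\ell}$). CMC conformal method: a data set $(g,\sigma,\tau_0)$ generates the solutions $\bar g=\phi^{q-2}g$, $\bar K=\phi^{-2}\sigma+\frac{\tau_0}{n}\bar g$ of the Einstein constraint equations $R_{\bar g}-|\bar K|^2+(\mathrm{tr}\bar K)^2=0$, $\mathrm{div}_{\bar g}\bar K=d\,\mathrm{tr}\bar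 K$, one for each positive solution $\phi$ of $-2\kappa q\Delta_g\phi+R_g\phi-|\sigma|_g^2\phi^{-q-1}+\kappa\tau_0^2\phi^{q-1}=0$. Cauchy data of a slice: induced metric and second fundamental form. *)

theory Defs
  imports "HOL-Analysis.Analysis"
begin

text \<open>Coordinates: the torus T^n = (R/Z)^n is represented by its universal cover
  real^'n with unit coordinates s^k; a function on T^n is a function on real^'n that is
  1-periodic in every coordinate.  n = CARD('n).  Tensor fields are given by their
  component matrices in the coordinates s^k.\<close>

definition dimn :: "'n::finite itself \<Rightarrow> real" where
  "dimn _ = real CARD('n)"

definition q_exp :: "'n::finite itself \<Rightarrow> real" where
  "q_exp N = 2 * dimn N / (dimn N - 2)"

definition kappa :: "'n::finite itself \<Rightarrow> real" where
  "kappa N = (dimn N - 1) / dimn N"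

definition torus_periodic :: "(real^'n \<Rightarrow> 'b) \<Rightarrow> bool" where
  "torus_periodic f \<longleftrightarrow> (\<forall>x k. f (x + axis k 1) = f x)"

definition partial :: "'n::finite \<Rightarrow> (real^'n \<Rightarrow> real) \<Rightarrow> real^'n \<Rightarrow> real" where
  "partial i f x = deriv (\<lambda>t. f (x + t *\<^sub>R axis i 1)) 0"

definition ginv :: "(real^'n \<Rightarrow> real^'n^'n) \<Rightarrow> real^'n \<Rightarrow> 'n::finite \<Rightarrow> 'n \<Rightarrow> real" where
  "ginv g x i j = matrix_inv (g x) $ i $ j"

definition christoffel :: "(real^'n \<Rightarrow> real^'n^'n) \<Rightarrow> 'n::finite \<Rightarrow> 'n \<Rightarrow> 'n \<Rightarrow> real^'n \<Rightarrow> real" where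
  "christoffel g k i j x = (1/2) * (\<Sum>l\<in>UNIV. ginv g x k l *
      (partial i (\<lambda>y. g y $ j $ l) x + partial j (\<lambda>y. g y $ i $ l) x
       - partial l (\<lambda>y. g y $ i $ j) x))"

text \<open>R^l_{ijk}: components of R(d_i,d_j)d_k.\<close>
definition riemann :: "(real^'n \<Rightarrow> real^'n^'n) \<Rightarrow> 'n::finite \<Rightarrow> 'n \<Rightarrow> 'n \<Rightarrow> 'n \<Rightarrow> real^'n \<Rightarrow> real" where
  "riemann g l i j k x =
     partial i (christoffel g l j k) x - partial j (christoffel g l i k) x
     + (\<Sum>p\<in>UNIV. christoffel g l i p x * christoffel g p j k x
                 - christoffel g l j p x * christoffel g p i k x)"

definition ricci :: "(real^'n \<Rightarrow> real^'n^'n) \<Rightarrow> 'n::finite \<Rightarrow> 'n \<Rightarrow> real^'n \<Rightarrow> real" where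
  "ricci g j k x = (\<Sum>i\<in>UNIV. riemann g i i j k x)"

definition scalar_curv :: "(real^'n::finite \<Rightarrow> real^'n^'n) \<Rightarrow> real^'n \<Rightarrow> real" where
  "scalar_curv g x = (\<Sum>j\<in>UNIV. \<Sum>k\<in>UNIV. ginv g x j k * ricci g j k x)"

definition laplacian :: "(real^'n::finite \<Rightarrow> real^'n^'n) \<Rightarrow> (real^'n \<Rightarrow> real) \<Rightarrow> real^'n \<Rightarrow> real" where
  "laplacian g \<phi> x = (\<Sum>i\<in>UNIV. \<Sum>j\<in>UNIV. ginv g x i j *
      (partial i (partial j \<phi>) x - (\<Sum>k\<in>UNIV. christoffel g k i j x * partial k \<phi> x)))"

definition tnorm_sq :: "(real^'n::finite \<Rightarrow> real^'n^'n) \<Rightarrow> (real^'n \<Rightarrow> real^'n^'n) \<Rightarrow> real^'n \<Rightarrow> real" where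
  "tnorm_sq g \<sigma> x = (\<Sum>i\<in>UNIV. \<Sum>j\<in>UNIV. \<Sum>k\<in>UNIV. \<Sum>l\<in>UNIV.
       ginv g x i k * ginv g x j l * \<sigma> x $ i $ j * \<sigma> x $ k $ l)"

definition g_ell :: "real^'n::finite \<Rightarrow> real^'n \<Rightarrow> real^'n^'n" where
  "g_ell l = (\<lambda>x. \<chi> i j. if i = j then (l $ i)\<^sup>2 else 0)"

definition sigma_b :: "real^'n::finite \<Rightarrow> real^'n \<Rightarrow> real^'n \<Rightarrow> real^'n^'n" where
  "sigma_b b l = (\<lambda>x. \<chi> i j. if i = j then b $ i * (l $ i)\<^sup>2 else 0)"

definition offset_kasner :: "real^'n::finite \<Rightarrow> bool" where
  "offset_kasner b \<longleftrightarrow> (\<Sum>k\<in>UNIV. b $ k) = 0 \<and> (\<Sum>k\<in>UNIV. (b $ k)\<^sup>2) = kappa TYPE('n)"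

definition torus_C2 :: "(real^'n::finite \<Rightarrow> real) \<Rightarrow> bool" where
  "torus_C2 \<phi> \<longleftrightarrow> torus_periodic \<phi> \<and> continuous_on UNIV \<phi> \<and>
     (\<forall>x i. (\<lambda>t. \<phi> (x + t *\<^sub>R axis i 1)) differentiable (at 0)) \<and>
     (\<forall>x i j. (\<lambda>t. partial j \<phi> (x + t *\<^sub>R axis i 1)) differentiable (at 0))"

definition lich_solution :: "(real^'n::finite \<Rightarrow> real^'n^'n) \<Rightarrow> (real^'n \<Rightarrow> real^'n^'n)
     \<Rightarrow> real \<Rightarrow> (real^'n \<Rightarrow> real) \<Rightarrow> bool" where
  "lich_solution g \<sigma> \<tau>0 \<phi> \<longleftrightarrow> torus_C2 \<phi> \<and> (\<forall>x. \<phi> x > 0) \<and>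
     (\<forall>x. - 2 * kappa TYPE('n) * q_exp TYPE('n) * laplacian g \<phi> x + scalar_curv g x * \<phi> x
          - tnorm_sq g \<sigma> x * \<phi> x powr (- q_exp TYPE('n) - 1)
          + kappa TYPE('n) * \<tau>0\<^sup>2 * \<phi> x powr (q_exp TYPE('n) - 1) = 0)"

definition cmc_generates :: "(real^'n::finite \<Rightarrow> real^'n^'n) \<Rightarrow> (real^'n \<Rightarrow> real^'n^'n) \<Rightarrow> real
     \<Rightarrow> (real^'n \<Rightarrow> real^'n^'n) \<Rightarrow> (real^'n \<Rightarrow> real^'n^'n) \<Rightarrow> bool" where
  "cmc_generates g \<sigma> \<tau>0 gbar Kbar \<longleftrightarrow> (\<exists>\<phi>. lich_solution g \<sigma> \<tau>0 \<phi> \<and>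
     gbar = (\<lambda>x. \<phi> x powr (q_exp TYPE('n) - 2) *\<^sub>R g x) \<and>
     Kbar = (\<lambda>x. \<phi> x powr (-2) *\<^sub>R \<sigma> x + (\<tau>0 / dimn TYPE('n)) *\<^sub>R gbar x))"

text \<open>Cauchy data (induced metric, second fundamental form) of the slice {t = t0} of a
  spacetime metric -dt^2 + h(t) (time-orthogonal form): (h(t0), (1/2) d/dt h(t0)).\<close>
definition slice_data :: "(real \<Rightarrow> real^'n::finite \<Rightarrow> real^'n^'n) \<Rightarrow> real
     \<Rightarrow> (real^'n \<Rightarrow> real^'n^'n) \<times> (real^'n \<Rightarrow> real^'n^'n)" where
  "slice_data h t0 = (h t0, (\<lambda>x. \<chi> i j. (1/2) * deriv (\<lambda>t. h t x $ i $ j) t0))"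

text \<open>Spatial part of the static toroidal spacetime -dt^2 + sum_k (r ell_k)^2 (ds^k)^2.\<close>
definition static_torus :: "real^'n::finite \<Rightarrow> real \<Rightarrow> real^'n \<Rightarrow> real^'n^'n" where
  "static_torus l t = g_ell l"

end

theory Submission
  imports Defs
begin

text \<open>The metric \<open>g\<^sub>\<ell>\<close> is flat with constant coefficients, so its scalar curvature
  vanishes, \<open>|\<mu> \<sigma>\<^sub>b\<^sub>,\<^sub>\<ell>|\<^sup>2 = \<mu>\<^sup>2 \<kappa>\<close> is constant, and the Lichnerowicz equation reads
  \<open>2\<kappa>q \<Delta>\<phi> = \<kappa>\<tau>\<^sub>0\<^sup>2 \<phi>\<^bsup>q-1\<^esup> - \<kappa>\<mu>\<^sup>2 \<phi>\<^bsup>-q-1\<^esup>\<close>. A periodic \<open>\<phi>\<close> attains its maximum and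
  minimum on the torus; there \<open>\<Delta>\<phi> \<le> 0\<close>, resp. \<open>\<Delta>\<phi> \<ge> 0\<close>. If \<open>\<mu> = 0\<close> the maximum forces
  \<open>\<tau>\<^sub>0 = 0\<close>, and if \<open>\<tau>\<^sub>0 = 0\<close> the minimum forces \<open>\<mu> = 0\<close>. When both vanish every positive
  constant solves the equation, and the constant \<open>r\<^bsup>(n-2)/2\<^esup>\<close> turns \<open>g\<^sub>\<ell>\<close> into
  \<open>g\<^sub>r\<^sub>\<ell> = r\<^sup>2 g\<^sub>\<ell>\<close>.\<close>

lemma mult_if_zero:
  fixes a c :: "'a::mult_zero"
  shows "(if P then a else 0) * c = (if P then a * c else 0)"
    and "c * (if P then a else 0) = (if P then c * a else 0)"
  by simp_all

lemma matrix_inv_eqI: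
  fixes A B :: "'a::semiring_1^'n^'n"
  assumes "A ** B = mat 1" "B ** A = mat 1"
  shows "matrix_inv A = B"
  unfolding matrix_inv_def
proof (rule some_equality)
  fix C assume "A ** C = mat 1 \<and> C ** A = mat 1"
  then have "C = (B ** A) ** C" using assms(2) by (simp add: matrix_mul_lid)
  also have "\<dots> = B" using \<open>A ** C = mat 1 \<and> C ** A = mat 1\<close>
    by (simp add: matrix_mul_assoc[symmetric] matrix_mul_rid)
  finally show "C = B" .
qed (use assms in auto)

lemma matrix_inv_diagonal:
  fixes d :: "'a::field^'n"
  assumes "\<forall>i. d $ i \<noteq> 0"
  shows "matrix_inv (\<chi> i j. if i = j then d $ i else 0)
       = (\<chi> i j. if i = j then inverse (d $ i) else 0)"
proof (rule matrix_inv_eqI)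
  show "(\<chi> i j. if i = j then d $ i else 0) ** (\<chi> i j. if i = j then inverse (d $ i) else 0) = mat 1"
    "(\<chi> i j. if i = j then inverse (d $ i) else 0) ** (\<chi> i j. if i = j then d $ i else 0) = mat 1"
    using assms by (auto simp: matrix_matrix_mult_def mat_def vec_eq_iff mult_if_zero)
qed

lemma partial_const: "partial i (\<lambda>y. c) = (\<lambda>y. 0)"
  by (simp add: partial_def fun_eq_iff)

lemma christoffel_const_metric: "christoffel (\<lambda>x. G) k i j = (\<lambda>x. 0)"
  by (simp add: christoffel_def partial_const fun_eq_iff)

lemma scalar_curv_const_metric: "scalar_curv (\<lambda>x. G) x = 0"
  by (simp add: scalar_curv_def ricci_def riemann_def christoffel_const_metric partial_const)

lemma ginv_g_ell:
  assumes "\<forall>k. l $ k \<noteq> (0::real)"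
  shows "ginv (g_ell l) x i j = (if i = j then inverse ((l $ i)\<^sup>2) else 0)"
proof -
  have "g_ell l x = (\<chi> i j. if i = j then (\<chi> k. (l $ k)\<^sup>2) $ i else 0)"
    by (simp add: g_ell_def vec_eq_iff)
  then show ?thesis
    using matrix_inv_diagonal[of "\<chi> k. (l $ k)\<^sup>2"] assms by (simp add: ginv_def)
qed

lemma christoffel_g_ell: "christoffel (g_ell l) k i j = (\<lambda>x. 0)"
  by (simp add: g_ell_def christoffel_const_metric)

lemma scalar_curv_g_ell: "scalar_curv (g_ell l) x = 0"
  by (simp add: g_ell_def scalar_curv_const_metric)

lemma laplacian_g_ell:
  assumes "\<forall>k. l $ k \<noteq> (0::real)"
  shows "laplacian (g_ell l) \<phi> x = (\<Sum>i\<in>UNIV. inverse ((l $ i)\<^sup>2) * partial i (partial i \<phi>) x)"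
  by (simp add: laplacian_def christoffel_g_ell ginv_g_ell[OF assms] mult_if_zero)

lemma tnorm_sq_sigma_b:
  assumes "\<forall>k. l $ k \<noteq> (0::real)"
  shows "tnorm_sq (g_ell l) (\<lambda>x. \<mu> *\<^sub>R sigma_b b l x) x = \<mu>\<^sup>2 * (\<Sum>i\<in>UNIV. (b $ i)\<^sup>2)"
proof -
  have sum_if: "(\<Sum>k\<in>A. if P then f k else 0) = (if P then \<Sum>k\<in>A. f k else 0)"
    for P and A :: "'n set" and f :: "'n \<Rightarrow> real"
    by simp
  have "tnorm_sq (g_ell l) (\<lambda>x. \<mu> *\<^sub>R sigma_b b l x) x
      = (\<Sum>i\<in>UNIV. (inverse ((l $ i)\<^sup>2))\<^sup>2 * (\<mu> * (b $ i * (l $ i)\<^sup>2))\<^sup>2)"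
    by (simp add: tnorm_sq_def ginv_g_ell[OF assms] sigma_b_def mult_if_zero power2_eq_square sum_if mult_ac cong: if_cong)
  also have "\<dots> = (\<Sum>i\<in>UNIV. \<mu>\<^sup>2 * (b $ i)\<^sup>2)"
    using assms by (intro sum.cong refl) (simp add: field_simps)
  finally show ?thesis by (simp add: sum_distrib_left)
qed

lemma deriv2_nonpos_at_max:
  fixes f f' :: "real \<Rightarrow> real"
  assumes f': "\<And>t. (f has_real_derivative f' t) (at t)"
    and f'': "(f' has_real_derivative D) (at a)"
    and max: "\<And>t. f t \<le> f a"
  shows "D \<le> 0"
proof (rule ccontr)
  assume "\<not> D \<le> 0"
  have "f' a = 0"
    by (rule DERIV_local_max[OF f', of 1]) (use max in auto)
  with f'' have "((\<lambda>h. f' (a + h) / h) \<longlongrightarrow> D) (at 0)"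
    by (simp add: DERIV_def)
  then have "\<forall>\<^sub>F h in at 0. f' (a + h) / h > 0"
    using \<open>\<not> D \<le> 0\<close> by (intro order_tendstoD(1)) auto
  then obtain d where "d > 0" and d: "\<And>h. h \<noteq> 0 \<Longrightarrow> dist h 0 < d \<Longrightarrow> f' (a + h) / h > 0"
    unfolding eventually_at by blast
  obtain z where z: "a < z" "z < a + d/2" "f (a + d/2) - f a = (a + d/2 - a) * f' z"
    using MVT2[of a "a + d/2" f f'] \<open>d > 0\<close> f' by auto
  have "f' (a + (z - a)) / (z - a) > 0"
    using d[of "z - a"] z by (auto simp: dist_real_def)
  then have "f' z > 0" using z by (simp add: zero_less_divide_iff)
  then have "(a + d/2 - a) * f' z > 0" using \<open>d > 0\<close> by simp
  with z(3) max[of "a + d/2"] show False by linarith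
qed

lemma deriv2_nonneg_at_min:
  fixes f f' :: "real \<Rightarrow> real"
  assumes "\<And>t. (f has_real_derivative f' t) (at t)"
    and "(f' has_real_derivative D) (at a)"
    and "\<And>t. f a \<le> f t"
  shows "D \<ge> 0"
  using deriv2_nonpos_at_max[of "\<lambda>t. - f t" "\<lambda>t. - f' t" "- D" a] assms
  by (auto intro: derivative_intros)

lemma torus_C2_has_derivative_along_axis:
  assumes "torus_C2 \<phi>"
  shows "((\<lambda>t. \<phi> (x + t *\<^sub>R axis i 1)) has_real_derivative partial i \<phi> (x + t *\<^sub>R axis i 1)) (at t)"
proof -
  let ?y = "x + t *\<^sub>R axis i 1"
  have "(\<lambda>s. \<phi> (?y + s *\<^sub>R axis i 1)) differentiable at 0"
    using assms by (simp add: torus_C2_def)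
  then have "((\<lambda>s. \<phi> (?y + s *\<^sub>R axis i 1)) has_real_derivative partial i \<phi> ?y) (at (t + - t))"
    by (simp add: partial_def DERIV_deriv_iff_real_differentiable)
  then have "((\<lambda>s. \<phi> (?y + (s + - t) *\<^sub>R axis i 1)) has_real_derivative partial i \<phi> ?y) (at t)"
    by (simp only: DERIV_shift)
  then show ?thesis
    by (simp add: algebra_simps)
qed

lemma torus_C2_has_second_derivative_along_axis:
  assumes "torus_C2 \<phi>"
  shows "((\<lambda>t. partial i \<phi> (x + t *\<^sub>R axis i 1)) has_real_derivative partial i (partial i \<phi>) x) (at 0)"
  using assms
  by (simp add: torus_C2_def DERIV_deriv_iff_real_differentiable partial_def[of i "partial i \<phi>"])

lemma torus_periodic_add_int:
  assumes "torus_periodic f"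
  shows "f (x + of_int m *\<^sub>R axis k 1) = f x"
proof (induction m rule: int_induct[where k = 0])
  case (step1 i)
  have "f (x + of_int (i + 1) *\<^sub>R axis k 1) = f ((x + of_int i *\<^sub>R axis k 1) + axis k 1)"
    by (simp add: algebra_simps)
  with step1 assms show ?case by (simp add: torus_periodic_def)
next
  case (step2 i)
  have "f (x + of_int i *\<^sub>R axis k 1) = f ((x + of_int (i - 1) *\<^sub>R axis k 1) + axis k 1)"
    by (simp add: algebra_simps)
  with step2 assms show ?case by (simp add: torus_periodic_def)
qed simp

lemma torus_periodic_add_lattice:
  assumes "torus_periodic f" "finite S"
  shows "f (x + (\<Sum>k\<in>S. of_int (c k) *\<^sub>R axis k 1)) = f x"
  using assms(2)
proof (induction S arbitrary: x rule: finite_induct)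
  case (insert a S)
  then have "f (x + (\<Sum>k\<in>insert a S. of_int (c k) *\<^sub>R axis k 1))
     = f ((x + of_int (c a) *\<^sub>R axis a 1) + (\<Sum>k\<in>S. of_int (c k) *\<^sub>R axis k 1))"
    by (simp add: algebra_simps)
  with insert torus_periodic_add_int[OF assms(1)] show ?case by simp
qed simp

lemma torus_periodic_frac:
  assumes "torus_periodic (f :: real^'n::finite \<Rightarrow> 'b)"
  shows "f x = f (\<chi> k. frac (x $ k))"
proof -
  have "x = (\<chi> k. frac (x $ k)) + (\<Sum>k\<in>UNIV. of_int \<lfloor>x $ k\<rfloor> *\<^sub>R axis k 1)"
    by (simp add: vec_eq_iff frac_def axis_def sum_component if_distrib cong: if_cong)
  then show ?thesis
    using torus_periodic_add_lattice[OF assms, of UNIV "\<chi> k. frac (x $ k)" "\<lambda>k. \<lfloor>x $ k\<rfloor>"]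
    by simp
qed

lemma torus_periodic_attains_extrema:
  assumes "torus_periodic (f :: real^'n::finite \<Rightarrow> real)" "continuous_on UNIV f"
  shows "\<exists>x. \<forall>y. f y \<le> f x" and "\<exists>x. \<forall>y. f x \<le> f y"
proof -
  let ?C = "cbox (0::real^'n) 1"
  have "0 \<in> ?C" by (simp add: mem_box_cart)
  then have C: "compact ?C" "?C \<noteq> {}" "continuous_on ?C f"
    using assms(2) continuous_on_subset by auto
  have frac_in_C: "(\<chi> k. frac (x $ k)) \<in> ?C" for x :: "real^'n"
    by (auto simp: mem_box_cart frac_ge_0 less_imp_le[OF frac_lt_1])
  show "\<exists>x. \<forall>y. f y \<le> f x"
    using continuous_attains_sup[OF C] frac_in_C torus_periodic_frac[OF assms(1)] by metis
  show "\<exists>x. \<forall>y. f x \<le> f y"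
    using continuous_attains_inf[OF C] frac_in_C torus_periodic_frac[OF assms(1)] by metis
qed

lemma laplacian_g_ell_nonpos_at_max:
  assumes "torus_C2 \<phi>" "\<forall>k. l $ k \<noteq> (0::real)" "\<forall>y. \<phi> y \<le> \<phi> x"
  shows "laplacian (g_ell l) \<phi> x \<le> 0"
proof -
  have "partial i (partial i \<phi>) x \<le> 0" for i
    using deriv2_nonpos_at_max[OF torus_C2_has_derivative_along_axis[OF assms(1)]
        torus_C2_has_second_derivative_along_axis[OF assms(1)]] assms(3) by simp
  then show ?thesis
    by (simp add: laplacian_g_ell[OF assms(2)] sum_nonpos mult_nonneg_nonpos)
qed

lemma laplacian_g_ell_nonneg_at_min:
  assumes "torus_C2 \<phi>" "\<forall>k. l $ k \<noteq> (0::real)" "\<forall>y. \<phi> x \<le> \<phi> y"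
  shows "laplacian (g_ell l) \<phi> x \<ge> 0"
proof -
  have "partial i (partial i \<phi>) x \<ge> 0" for i
    using deriv2_nonneg_at_min[OF torus_C2_has_derivative_along_axis[OF assms(1)]
        torus_C2_has_second_derivative_along_axis[OF assms(1)]] assms(3) by simp
  then show ?thesis
    by (simp add: laplacian_g_ell[OF assms(2)] sum_nonneg)
qed

lemma kappa_pos: "CARD('n::finite) \<ge> 3 \<Longrightarrow> kappa TYPE('n) > 0"
  by (simp add: kappa_def dimn_def)

lemma q_exp_pos: "CARD('n::finite) \<ge> 3 \<Longrightarrow> q_exp TYPE('n) > 0"
  by (simp add: q_exp_def dimn_def)

lemma lich_solution_g_ell_sigma_b:
  fixes l b :: "real^'n::finite"
  assumes "\<forall>k. l $ k \<noteq> 0" "offset_kasner b"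
    and "lich_solution (g_ell l) (\<lambda>x. \<mu> *\<^sub>R sigma_b b l x) \<tau>0 \<phi>"
  shows "2 * kappa TYPE('n) * q_exp TYPE('n) * laplacian (g_ell l) \<phi> x
       = kappa TYPE('n) * \<tau>0\<^sup>2 * \<phi> x powr (q_exp TYPE('n) - 1)
         - kappa TYPE('n) * \<mu>\<^sup>2 * \<phi> x powr (- q_exp TYPE('n) - 1)"
  using assms
  by (simp add: lich_solution_def scalar_curv_g_ell tnorm_sq_sigma_b offset_kasner_def
      algebra_simps)

lemma lich_solution_g_ell_sigma_b_trivial:
  fixes l b :: "real^'n::finite"
  assumes "CARD('n) \<ge> 3" "\<forall>k. l $ k \<noteq> 0" "offset_kasner b" "\<mu> = 0 \<or> \<tau>0 = 0"
    and sol: "lich_solution (g_ell l) (\<lambda>x. \<mu> *\<^sub>R sigma_b b l x) \<tau>0 \<phi>"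
  shows "\<mu> = 0 \<and> \<tau>0 = 0"
proof -
  have C2: "torus_C2 \<phi>" and pos: "\<And>x. \<phi> x > 0"
    using sol by (auto simp: lich_solution_def)
  have \<kappa>: "kappa TYPE('n) > 0" and q: "q_exp TYPE('n) > 0"
    using kappa_pos q_exp_pos assms(1) by auto
  note eq = lich_solution_g_ell_sigma_b[OF assms(2,3) sol]
  have "\<tau>0 = 0" if "\<mu> = 0"
  proof -
    obtain x where "\<forall>y. \<phi> y \<le> \<phi> x"
      using torus_periodic_attains_extrema(1)[of \<phi>] C2 unfolding torus_C2_def by blast
    then have "laplacian (g_ell l) \<phi> x \<le> 0"
      using laplacian_g_ell_nonpos_at_max C2 assms(2) by blast
    then have "2 * kappa TYPE('n) * q_exp TYPE('n) * laplacian (g_ell l) \<phi> x \<le> 0"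
      using \<kappa> q by (simp add: mult_nonneg_nonpos)
    then have "kappa TYPE('n) * \<tau>0\<^sup>2 * \<phi> x powr (q_exp TYPE('n) - 1) \<le> 0"
      using eq[of x] \<open>\<mu> = 0\<close> by simp
    then show ?thesis
      using \<kappa> pos[of x] by (simp add: mult_le_0_iff)
  qed
  moreover have "\<mu> = 0" if "\<tau>0 = 0"
  proof -
    obtain x where "\<forall>y. \<phi> x \<le> \<phi> y"
      using torus_periodic_attains_extrema(2)[of \<phi>] C2 unfolding torus_C2_def by blast
    then have "laplacian (g_ell l) \<phi> x \<ge> 0"
      using laplacian_g_ell_nonneg_at_min C2 assms(2) by blast
    then have "2 * kappa TYPE('n) * q_exp TYPE('n) * laplacian (g_ell l) \<phi> x \<ge> 0"
      using \<kappa> q by simp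
    then have "kappa TYPE('n) * \<mu>\<^sup>2 * \<phi> x powr (- q_exp TYPE('n) - 1) \<le> 0"
      using eq[of x] \<open>\<tau>0 = 0\<close> by simp
    then show ?thesis
      using \<kappa> pos[of x] by (simp add: mult_le_0_iff)
  qed
  ultimately show ?thesis using assms(4) by blast
qed

lemma g_ell_scaleR: "g_ell (r *\<^sub>R l) x = r\<^sup>2 *\<^sub>R g_ell l x"
  by (simp add: g_ell_def vec_eq_iff power_mult_distrib)

lemma cmc_generates_g_ell_rescaled:
  fixes l :: "real^'n::finite"
  assumes "CARD('n) \<ge> 3" "\<forall>k. l $ k \<noteq> 0" "r > 0"
  shows "cmc_generates (g_ell l) (\<lambda>x. 0) 0 (g_ell (r *\<^sub>R l)) (\<lambda>x. 0)"
proof -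
  define n where "n = dimn TYPE('n)"
  have "n \<ge> 3" using assms(1) by (simp add: n_def dimn_def)
  define c where "c = r powr ((n - 2) / 2)"
  have "c > 0" using assms(3) by (simp add: c_def)
  have "torus_C2 (\<lambda>x::real^'n. c)"
    by (simp add: torus_C2_def torus_periodic_def partial_const)
  with \<open>c > 0\<close> have sol: "lich_solution (g_ell l) (\<lambda>x. 0) 0 (\<lambda>x. c)"
    by (simp add: lich_solution_def laplacian_g_ell[OF assms(2)] partial_const
        scalar_curv_g_ell tnorm_sq_def)
  have "q_exp TYPE('n) - 2 = 4 / (n - 2)"
    using \<open>n \<ge> 3\<close> by (simp add: q_exp_def n_def[symmetric] field_simps)
  then have "c powr (q_exp TYPE('n) - 2) = r powr ((n - 2) / 2 * (4 / (n - 2)))"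
    by (simp add: c_def powr_powr)
  also have "(n - 2) / 2 * (4 / (n - 2)) = 2"
    using \<open>n \<ge> 3\<close> by (simp add: field_simps)
  also have "r powr 2 = r\<^sup>2"
    using assms(3) by (simp add: powr_numeral)
  finally show ?thesis
    unfolding cmc_generates_def using sol
    by (intro exI[of _ "\<lambda>x. c"]) (simp add: g_ell_scaleR fun_eq_iff)
qed

theorem proposition4p2:
  fixes l b :: "real^'n::finite" and \<mu> \<tau>0 :: real
  assumes "CARD('n) \<ge> 3"
    and "\<forall>k. l $ k > 0"
    and "offset_kasner b"
    and "\<mu> = 0 \<or> \<tau>0 = 0"
  shows "((\<exists>gbar Kbar. cmc_generates (g_ell l) (\<lambda>x. \<mu> *\<^sub>R sigma_b b l x) \<tau>0 gbar Kbar)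
           \<longrightarrow> \<mu> = 0 \<and> \<tau>0 = 0)
       \<and> (\<mu> = 0 \<and> \<tau>0 = 0 \<longrightarrow>
           (\<forall>r > 0. cmc_generates (g_ell l) (\<lambda>x. \<mu> *\<^sub>R sigma_b b l x) \<tau>0
                        (g_ell (r *\<^sub>R l)) (\<lambda>x. 0)
                    \<and> (\<forall>t0. slice_data (static_torus (r *\<^sub>R l)) t0 = (g_ell (r *\<^sub>R l), (\<lambda>x. 0)))))"
proof -
  have l: "\<forall>k. l $ k \<noteq> 0" using assms(2) by (metis less_irrefl)
  have "\<mu> = 0 \<and> \<tau>0 = 0"
    if "cmc_generates (g_ell l) (\<lambda>x. \<mu> *\<^sub>R sigma_b b l x) \<tau>0 gbar Kbar" for gbar Kbar
    using that lich_solution_g_ell_sigma_b_trivial[OF assms(1) l assms(3,4)]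
    by (auto simp: cmc_generates_def)
  moreover have "slice_data (static_torus (r *\<^sub>R l)) t0 = (g_ell (r *\<^sub>R l), (\<lambda>x. 0))" for r t0
    by (simp add: slice_data_def static_torus_def vec_eq_iff fun_eq_iff)
  ultimately show ?thesis
    using cmc_generates_g_ell_rescaled[OF assms(1) l] by auto
qed

end
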